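(* Let $R$ be a D-regularly nil clean ring. Then its center $C(R)$ is again a D-regularly nil clean ring.
   Context: All rings are associative with identity $1\neq 0$. $C(R)$ denotes the center of $R$, $Id(R)$ the set of idempotents, $Nil(R)$ the set of nilpotent elements. A ring $R$ is called D-regularly nil clean if for each $a\in R$ there exists an idempotent $e\in aRa\cap Id(R)$ such that $a(1-e)\in Nil(R)$. *)

theory Defs
  imports "HOL-Algebra.Ring"
begin

definition Idems :: "('a, 'b) ring_scheme \<Rightarrow> 'a set" where
  "Idems A = {e \<in> carrier A. mult A e e = e}"

definition Nilps :: "('a, 'b) ring_scheme \<Rightarrow> 'a set" where
  "Nilps A = {x \<in> carrier A. \<exists>n::nat. pow A x n = zero A}"

definition D_regularly_nil_clean :: "('a, 'b) ring_scheme \<Rightarrow> bool" where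
  "D_regularly_nil_clean A \<longleftrightarrow>
     (\<forall>a \<in> carrier A. \<exists>e. e \<in> Idems A \<and>
        (\<exists>r \<in> carrier A. e = mult A (mult A a r) a) \<and>
        mult A a (a_minus A (one A) e) \<in> Nilps A)"

definition center :: "('a, 'b) ring_scheme \<Rightarrow> 'a set" where
  "center A = {z \<in> carrier A. \<forall>x \<in> carrier A. mult A z x = mult A x z}"

definition center_ring :: "('a, 'b) ring_scheme \<Rightarrow> ('a, 'b) ring_scheme" where
  "center_ring A = A\<lparr>carrier := center A\<rparr>"

end

theory Submission
  imports Defs "HOL-Algebra.Subrings"
begin

text \<open>For central a, the defining idempotent e = ara is forced into the center. Choosing
  n with (a(1 - e))^n = 0, the central element c = a^(n+1) satisfies c(1 - e) = 0, and
  e = e^(n+1) = c (ra)^(n+1) lies in cR. An element e = ct with c central and c(1 - e) = 0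
  is central, since ex(1 - e) = tx c(1 - e) = 0 and (1 - e)xe = c(1 - e)xt = 0. Once e is
  central, u = are is central with au = ua = e, so e = a u^2 a with u^2 in the center.\<close>

lemma center_ring_simps [simp]:
  "carrier (center_ring R) = center R"
  "mult (center_ring R) = mult R"
  "one (center_ring R) = one R"
  "zero (center_ring R) = zero R"
  "add (center_ring R) = add R"
  by (simp_all add: center_ring_def)

context ring
begin

lemma center_subset_carrier: "center R \<subseteq> carrier R"
  unfolding center_def by auto

lemma center_commute: "z \<in> center R \<Longrightarrow> x \<in> carrier R \<Longrightarrow> z \<otimes> x = x \<otimes> z"
  unfolding center_def by auto

lemma subring_center: "subring (center R) R"
proof (rule subringI)
  show "center R \<subseteq> carrier R" by (rule center_subset_carrier)
  show "\<one> \<in> center R" unfolding center_def by auto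
next
  fix h assume "h \<in> center R"
  then show "\<ominus> h \<in> center R"
    unfolding center_def by (auto simp: l_minus r_minus)
next
  fix h1 h2 assume h: "h1 \<in> center R" "h2 \<in> center R"
  then have c: "h1 \<in> carrier R" "h2 \<in> carrier R" using center_subset_carrier by auto
  show "h1 \<otimes> h2 \<in> center R" unfolding center_def
  proof (intro CollectI conjI ballI)
    fix x assume x: "x \<in> carrier R"
    have "h1 \<otimes> h2 \<otimes> x = h1 \<otimes> (x \<otimes> h2)"
      using c x center_commute[OF h(2) x] by (simp add: m_assoc)
    also have "\<dots> = x \<otimes> (h1 \<otimes> h2)"
      using c x center_commute[OF h(1) x] by (simp add: m_assoc[symmetric])
    finally show "h1 \<otimes> h2 \<otimes> x = x \<otimes> (h1 \<otimes> h2)" .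
  qed (use c in simp)
  show "h1 \<oplus> h2 \<in> center R" unfolding center_def
    using c center_commute[OF h(1)] center_commute[OF h(2)] by (auto simp: l_distr r_distr)
qed

lemma center_nat_pow: "a \<in> center R \<Longrightarrow> a [^] (n::nat) \<in> center R"
  by (induction n) (auto intro: subringE(3,6)[OF subring_center])

lemma idempotent_nat_pow_Suc:
  assumes "x \<in> carrier R" "x \<otimes> x = x"
  shows "x [^] Suc n = x"
  using assms by (induction n) auto

lemma one_minus_idempotent:
  assumes "e \<in> carrier R" "e \<otimes> e = e"
  shows "(\<one> \<ominus> e) \<otimes> (\<one> \<ominus> e) = \<one> \<ominus> e"
  using assms by (simp add: r_distr l_distr a_minus_def l_minus r_minus a_ac r_neg)

lemma center_if_annihilated_complement:
  assumes c: "c \<in> center R" and t: "t \<in> carrier R"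
    and e: "e = c \<otimes> t" and ann: "c \<otimes> (\<one> \<ominus> e) = \<zero>"
  shows "e \<in> center R"
proof -
  have cc: "c \<in> carrier R" using c center_subset_carrier by auto
  have ec: "e \<in> carrier R" using e cc t by simp
  have fc: "\<one> \<ominus> e \<in> carrier R" using ec by simp
  have ann': "(\<one> \<ominus> e) \<otimes> c = \<zero>" using ann center_commute[OF c fc] by simp
  show ?thesis unfolding center_def
  proof (intro CollectI conjI ballI ec)
    fix x assume x: "x \<in> carrier R"
    have "e \<otimes> x \<ominus> e \<otimes> x \<otimes> e = e \<otimes> x \<otimes> (\<one> \<ominus> e)"
      using ec x by (simp add: a_minus_def r_distr r_minus)
    also have "\<dots> = t \<otimes> x \<otimes> (c \<otimes> (\<one> \<ominus> e))"
      unfolding e using center_commute[OF c, of "t \<otimes> x"] cc t x fc by (simp add: m_assoc)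
    also have "\<dots> = \<zero>" using ann t x by simp
    finally have ex: "e \<otimes> x = e \<otimes> x \<otimes> e" using ec x by simp
    have "x \<otimes> e \<ominus> e \<otimes> x \<otimes> e = (\<one> \<ominus> e) \<otimes> x \<otimes> e"
      using ec x by (simp add: a_minus_def l_distr l_minus)
    also have "\<dots> = (\<one> \<ominus> e) \<otimes> (x \<otimes> c \<otimes> t)" using fc x cc t by (simp add: e m_assoc)
    also have "\<dots> = (\<one> \<ominus> e) \<otimes> (c \<otimes> x \<otimes> t)" by (simp only: center_commute[OF c x])
    also have "\<dots> = (\<one> \<ominus> e) \<otimes> c \<otimes> (x \<otimes> t)" using fc x cc t by (simp add: m_assoc)
    also have "\<dots> = \<zero>" using ann' t x by simp
    finally have xe: "x \<otimes> e = e \<otimes> x \<otimes> e" using ec x by simp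
    show "e \<otimes> x = x \<otimes> e" using ex xe by simp
  qed
qed

lemma center_if_inverse_in_corner:
  assumes a: "a \<in> center R" and e: "e \<in> center R" and u: "u \<in> carrier R"
    and au: "a \<otimes> u = e" and ue: "u \<otimes> e = u"
  shows "u \<in> center R"
  unfolding center_def
proof (intro CollectI conjI ballI u)
  have ac: "a \<in> carrier R" and ec: "e \<in> carrier R" using a e center_subset_carrier by auto
  have ua: "u \<otimes> a = e" using au center_commute[OF a u] by simp
  fix x assume x: "x \<in> carrier R"
  have "u \<otimes> x = u \<otimes> (x \<otimes> e)"
    using ue center_commute[OF e x] u ec x by (metis m_assoc)
  also have "\<dots> = u \<otimes> (a \<otimes> x) \<otimes> u"
    using center_commute[OF a x] u ac x by (simp add: au[symmetric] m_assoc)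
  also have "\<dots> = (u \<otimes> a) \<otimes> x \<otimes> u" using u ac x by (simp add: m_assoc)
  also have "\<dots> = e \<otimes> x \<otimes> u" by (simp only: ua)
  also have "\<dots> = x \<otimes> (u \<otimes> e)"
    using center_commute[OF e x] center_commute[OF e u] u ec x by (simp add: m_assoc)
  finally show "u \<otimes> x = x \<otimes> u" using ue by simp
qed

lemma central_idempotent_in_corner:
  assumes a: "a \<in> center R" and e: "e \<in> center R" "e \<otimes> e = e"
    and r: "r \<in> carrier R" and ara: "e = a \<otimes> r \<otimes> a"
  shows "\<exists>s \<in> center R. e = a \<otimes> s \<otimes> a"
proof -
  have ac: "a \<in> carrier R" and ec: "e \<in> carrier R" using a e center_subset_carrier by auto
  define u where "u = a \<otimes> r \<otimes> e"
  have uc: "u \<in> carrier R" unfolding u_def using ac r ec by simp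
  have "a \<otimes> u = a \<otimes> (a \<otimes> r) \<otimes> e" using ac r ec by (simp add: u_def m_assoc)
  also have "\<dots> = e \<otimes> e" using center_commute[OF a, of "a \<otimes> r"] ac r by (simp add: ara)
  finally have au: "a \<otimes> u = e" using e(2) by simp
  have ue: "u \<otimes> e = u" using e(2) ac r ec by (simp add: u_def m_assoc)
  have uZ: "u \<in> center R" by (rule center_if_inverse_in_corner[OF a e(1) uc au ue])
  have "a \<otimes> (u \<otimes> u) \<otimes> a = (a \<otimes> u) \<otimes> (u \<otimes> a)" using ac uc by (simp add: m_assoc)
  also have "\<dots> = e" using au center_commute[OF a uc] e(2) by simp
  finally have "e = a \<otimes> (u \<otimes> u) \<otimes> a" by simp
  moreover have "u \<otimes> u \<in> center R" by (rule subringE(6)[OF subring_center uZ uZ])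
  ultimately show ?thesis by blast
qed

lemma D_regular_idempotent_central:
  assumes a: "a \<in> center R" and e: "e \<in> carrier R" "e \<otimes> e = e"
    and r: "r \<in> carrier R" and ara: "e = a \<otimes> r \<otimes> a"
    and nil: "a \<otimes> (\<one> \<ominus> e) \<in> Nilps R"
  shows "e \<in> center R" "\<exists>s \<in> center R. e = a \<otimes> s \<otimes> a"
proof -
  have ac: "a \<in> carrier R" using a center_subset_carrier by auto
  obtain n :: nat where n: "(a \<otimes> (\<one> \<ominus> e)) [^] n = \<zero>"
    using nil unfolding Nilps_def by auto
  define c where "c = a [^] Suc n"
  have cZ: "c \<in> center R" unfolding c_def using a by (rule center_nat_pow)
  have fc: "\<one> \<ominus> e \<in> carrier R" using e by simp
  have "(a \<otimes> (\<one> \<ominus> e)) [^] Suc n = a [^] Suc n \<otimes> (\<one> \<ominus> e) [^] Suc n"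
    by (rule pow_mult_distrib[OF center_commute[OF a fc] ac fc])
  then have "(a \<otimes> (\<one> \<ominus> e)) [^] Suc n = c \<otimes> (\<one> \<ominus> e)"
    by (simp only: idempotent_nat_pow_Suc[OF fc one_minus_idempotent[OF e]] c_def)
  moreover have "(a \<otimes> (\<one> \<ominus> e)) [^] Suc n = \<zero>" using n ac fc by simp
  ultimately have ann: "c \<otimes> (\<one> \<ominus> e) = \<zero>" by simp
  have "e = a \<otimes> (r \<otimes> a)" using ara ac r by (simp add: m_assoc)
  then have "e = (a \<otimes> (r \<otimes> a)) [^] Suc n" using idempotent_nat_pow_Suc[OF e, of n] by simp
  also have "\<dots> = c \<otimes> (r \<otimes> a) [^] Suc n"
    unfolding c_def using ac r by (intro pow_mult_distrib center_commute[OF a]) auto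
  finally have "e = c \<otimes> (r \<otimes> a) [^] Suc n" .
  then show eZ: "e \<in> center R"
    using center_if_annihilated_complement[OF cZ _ _ ann] ac r by simp
  show "\<exists>s \<in> center R. e = a \<otimes> s \<otimes> a"
    by (rule central_idempotent_in_corner[OF a eZ e(2) r ara])
qed

lemma ring_center_ring: "ring (center_ring R)"
  unfolding center_ring_def by (rule subring_is_ring[OF subring_center])

lemma center_ring_minus:
  assumes "y \<in> center R"
  shows "x \<ominus>\<^bsub>center_ring R\<^esub> y = x \<ominus> y"
proof -
  interpret C: ring "center_ring R" by (rule ring_center_ring)
  have yC: "y \<in> carrier (center_ring R)" using assms by simp
  have "\<ominus>\<^bsub>center_ring R\<^esub> y \<in> center R" using C.a_inv_closed[OF yC] by simp
  moreover have "y \<oplus> \<ominus>\<^bsub>center_ring R\<^esub> y = \<zero>" using C.r_neg[OF yC] by simp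
  ultimately have "\<ominus>\<^bsub>center_ring R\<^esub> y = \<ominus> y"
    using assms center_subset_carrier by (metis add.inv_equality add.m_comm subsetD)
  then show ?thesis by (simp add: a_minus_def)
qed

end

lemma nat_pow_center_ring: "pow (center_ring R) x (n::nat) = pow R x n"
  by (induction n) (simp_all add: center_ring_def)

lemma Idems_center_ring: "Idems (center_ring R) = Idems R \<inter> center R"
  by (auto simp: Idems_def center_def)

lemma Nilps_center_ring: "Nilps (center_ring R) = Nilps R \<inter> center R"
  by (auto simp: Nilps_def nat_pow_center_ring center_def)

lemma (in ring) D_regularly_nil_clean_center_ring:
  assumes "D_regularly_nil_clean R"
  shows "D_regularly_nil_clean (center_ring R)"
  unfolding D_regularly_nil_clean_def
proof
  fix a assume "a \<in> carrier (center_ring R)"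
  then have a: "a \<in> center R" by simp
  then obtain e r where e: "e \<in> Idems R" and r: "r \<in> carrier R" and ara: "e = a \<otimes> r \<otimes> a"
    and nil: "a \<otimes> (\<one> \<ominus> e) \<in> Nilps R"
    using assms center_subset_carrier unfolding D_regularly_nil_clean_def by blast
  have ec: "e \<in> carrier R" "e \<otimes> e = e" using e by (auto simp: Idems_def)
  note central = D_regular_idempotent_central[OF a ec r ara nil]
  then obtain s where s: "s \<in> center R" "e = a \<otimes> s \<otimes> a" by blast
  have "a \<otimes> (\<one> \<ominus> e) \<in> center R"
    using a central(1) subringE(3,5,6,7)[OF subring_center] by (simp add: a_minus_def)
  with nil have nilC: "a \<otimes> (\<one> \<ominus> e) \<in> Nilps (center_ring R)"
    by (simp add: Nilps_center_ring)
  show "\<exists>e. e \<in> Idems (center_ring R)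
      \<and> (\<exists>r\<in>carrier (center_ring R). e = a \<otimes>\<^bsub>center_ring R\<^esub> r \<otimes>\<^bsub>center_ring R\<^esub> a)
      \<and> a \<otimes>\<^bsub>center_ring R\<^esub> (\<one>\<^bsub>center_ring R\<^esub> \<ominus>\<^bsub>center_ring R\<^esub> e) \<in> Nilps (center_ring R)"
  proof (intro exI conjI)
    show "e \<in> Idems (center_ring R)" using e central(1) by (simp add: Idems_center_ring)
    show "\<exists>r\<in>carrier (center_ring R). e = a \<otimes>\<^bsub>center_ring R\<^esub> r \<otimes>\<^bsub>center_ring R\<^esub> a"
      using s by auto
  qed (use nilC in \<open>simp add: center_ring_minus[OF central(1)]\<close>)
qed

theorem proposition2p2:
  fixes R :: "('a, 'b) ring_scheme"
  assumes "ring R"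
    and "\<one>\<^bsub>R\<^esub> \<noteq> \<zero>\<^bsub>R\<^esub>"
    and "D_regularly_nil_clean R"
  shows "ring (center_ring R) \<and> \<one>\<^bsub>center_ring R\<^esub> \<noteq> \<zero>\<^bsub>center_ring R\<^esub>
         \<and> D_regularly_nil_clean (center_ring R)"
proof -
  interpret ring R by fact
  have "\<one>\<^bsub>center_ring R\<^esub> \<noteq> \<zero>\<^bsub>center_ring R\<^esub>"
    using assms(2) by simp
  then show ?thesis
    using ring_center_ring D_regularly_nil_clean_center_ring[OF assms(3)] by blast
qed

end
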